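(* Let $\beta\in(0,\tfrac12)$ and let $u:\mathbb{T}_m\to\mathbb{R}$ be an eigenfunction associated with $\lambda_1(\beta)$ such that $u(\emptyset)=1$, $u$ is constant on each level and strictly decreasing with respect to the level. Writing $u_k$ for the common value of $u$ on level $k$, we have $$\liminf_{k\to\infty}\frac{u_k-u_{k+1}}{p_\beta^k}\ge\lambda_1(\beta).$$
   Context: Tree: for an integer $m\ge2$, $\mathbb{T}_m$ has vertices the root $\emptyset$ and all finite sequences $(\emptyset,a_1,\dots,a_k)$, $a_i\in\{0,\dots,m-1\}$; $|x|$ is the level, successors of $x$ are $(x,i)$, $\hat x$ is the immediate predecessor of $x\ne\emptyset$. A branch is an infinite sequence $(x_n)_{n\ge0}$ with $x_0=\emptyset$, $x_{n+1}$ a successor of $x_n$; $\lim_{x\to y}u(x)=\lim_n u(x_n)$ for a branch $y=(x_n)$. Operator: $p_\beta=\beta/(1-\beta)$ for $\beta\in(0,1)$. $\Delta_\beta u(\emptyset)=\frac1m\sum_{i=0}^{m-1}u(\emptyset,i)-u(\emptyset)$ and, for $x\ne\emptyset$, $\Delta_\beta u(x)=\big(\beta u(\hat x)+\frac{1-\beta}{m}\sum_{i=0}^{m-1}u(x,i)-u(x)\big)p_\beta^{-|x|}$. Eigenfunction for $\lambda$: a bounded $u\not\equiv0$ with $-\Delta_\beta u=\lambda u$ on $\mathbb{T}_m$ and $\lim_{x\to y}u(x)=0$ for every branch $y$. $\mathcal{A}_\beta=\{\lambda>0:\exists v:\mathbb{T}_m\to\mathbb{R}\text{ and constants }0<c<C\text{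 with } c<v<C \text{ and } \Delta_\beta v+\lambda v\le0 \text{ on }\mathbb{T}_m\}$, $\lambda_1(\beta)=\sup\mathcal{A}_\beta$. *)

theory Defs
  imports "HOL-Analysis.Analysis"
begin

text \<open>Vertices of the m-ary tree: the root is the empty list, the vertex
  (root, a1, ..., ak) is the list [a1, ..., ak] with all ai < m.
  Successors of x are x @ [i], the predecessor is butlast x, the level is length x.\<close>

definition tree :: "nat \<Rightarrow> nat list set" where
  "tree m = {xs. \<forall>a\<in>set xs. a < m}"

definition pb :: "real \<Rightarrow> real" where
  "pb \<beta> = \<beta> / (1 - \<beta>)"

definition Lap :: "nat \<Rightarrow> real \<Rightarrow> (nat list \<Rightarrow> real) \<Rightarrow> nat list \<Rightarrow> real" where
  "Lap m \<beta> u x =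
     (if x = [] then (1 / real m) * (\<Sum>i<m. u [i]) - u []
      else (\<beta> * u (butlast x) + ((1 - \<beta>) / real m) * (\<Sum>i<m. u (x @ [i])) - u x)
             / (pb \<beta>) ^ length x)"

definition is_branch :: "nat \<Rightarrow> (nat \<Rightarrow> nat list) \<Rightarrow> bool" where
  "is_branch m y \<longleftrightarrow> y 0 = [] \<and> (\<forall>n. \<exists>i<m. y (Suc n) = y n @ [i])"

definition eigenfunction :: "nat \<Rightarrow> real \<Rightarrow> real \<Rightarrow> (nat list \<Rightarrow> real) \<Rightarrow> bool" where
  "eigenfunction m \<beta> lam u \<longleftrightarrow>
     (\<exists>B. \<forall>x\<in>tree m. \<bar>u x\<bar> \<le> B) \<and>
     (\<exists>x\<in>tree m. u x \<noteq> 0) \<and>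
     (\<forall>x\<in>tree m. - Lap m \<beta> u x = lam * u x) \<and>
     (\<forall>y. is_branch m y \<longrightarrow> ((\<lambda>n. u (y n)) \<longlongrightarrow> 0) sequentially)"

definition A_set :: "nat \<Rightarrow> real \<Rightarrow> real set" where
  "A_set m \<beta> = {lam. lam > 0 \<and> (\<exists>v c C. 0 < c \<and> c < C \<and>
      (\<forall>x\<in>tree m. c < v x \<and> v x < C \<and> Lap m \<beta> v x + lam * v x \<le> 0))}"

definition lambda1 :: "nat \<Rightarrow> real \<Rightarrow> real" where
  "lambda1 m \<beta> = Sup (A_set m \<beta>)"

end

theory Submission
  imports Defs
begin

text \<open>Along the ray of vertices 0^k the eigenvalue equation for a level-constant u becomes a
  second-order recurrence for its level values u_k. Dividing it by (1 - \<beta>) p^(k+1) shows that the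
  scaled increments D_k = (u_k - u_(k+1)) / p^k satisfy D_(k+1) = D_k + \<lambda> u_(k+1) / (1 - \<beta>).
  Since u_k decreases to 0, all u_k are nonnegative, so D_k is nondecreasing and
  D_k \<ge> D_0 = u_0 - u_1 = \<lambda> u_0 = \<lambda>. The argument only needs m \<ge> 1 and 0 < \<beta> < 1.\<close>

lemma replicate_zero_in_tree: "0 < m \<Longrightarrow> replicate n 0 \<in> tree m"
  by (simp add: tree_def)

lemma is_branch_replicate_zero: "0 < m \<Longrightarrow> is_branch m (\<lambda>n. replicate n 0)"
  unfolding is_branch_def by (metis replicate_Suc replicate_append_same replicate_0)

lemma Lap_level_constant:
  assumes "0 < m" and level: "\<forall>x\<in>tree m. u x = f (length x)" and "x \<in> tree m"
  shows "Lap m \<beta> u x =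
    (if x = [] then f 1 - f 0
     else (\<beta> * f (length x - 1) + (1 - \<beta>) * f (Suc (length x)) - f (length x)) / pb \<beta> ^ length x)"
proof -
  have children: "(\<Sum>i<m. u (x @ [i])) = real m * f (Suc (length x))"
    using level \<open>x \<in> tree m\<close> by (simp add: tree_def)
  have "u (butlast x) = f (length x - 1)"
    using level \<open>x \<in> tree m\<close> by (simp add: tree_def in_set_butlastD)
  with children level \<open>x \<in> tree m\<close> \<open>0 < m\<close> show ?thesis
    by (auto simp: Lap_def)
qed

lemma pb_pos: "0 < \<beta> \<Longrightarrow> \<beta> < 1 \<Longrightarrow> 0 < pb \<beta>"
  by (simp add: pb_def)

lemma level_values_recurrence:
  assumes "0 < m" and "0 < \<beta>" and "\<beta> < 1" and eq: "\<forall>x\<in>tree m. - Lap m \<beta> u x = lam * u x"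
    and level: "\<forall>x\<in>tree m. u x = f (length x)"
  shows level_values_recurrence_root: "f 0 - f 1 = lam * f 0"
    and level_values_recurrence_Suc:
      "\<beta> * f k + (1 - \<beta>) * f (Suc (Suc k)) - f (Suc k) = - lam * pb \<beta> ^ Suc k * f (Suc k)"
proof -
  have "- Lap m \<beta> u [] = lam * u []"
    using eq by (simp add: tree_def)
  then show "f 0 - f 1 = lam * f 0"
    using Lap_level_constant[OF \<open>0 < m\<close> level, of "[]"] level by (simp add: tree_def)
next
  let ?x = "replicate (Suc k) (0::nat)"
  have x: "?x \<in> tree m"
    using \<open>0 < m\<close> by (rule replicate_zero_in_tree)
  have "- Lap m \<beta> u ?x = lam * f (Suc k)"
    using eq x level by (simp del: replicate_Suc)
  moreover have "Lap m \<beta> u ?x = (\<beta> * f k + (1 - \<beta>) * f (Suc (Suc k)) - f (Suc k)) / pb \<beta> ^ Suc k"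
    using Lap_level_constant[OF \<open>0 < m\<close> level x] by (simp del: replicate_Suc)
  moreover have "pb \<beta> ^ Suc k \<noteq> 0"
    using pb_pos[OF \<open>0 < \<beta>\<close> \<open>\<beta> < 1\<close>] by simp
  ultimately show "\<beta> * f k + (1 - \<beta>) * f (Suc (Suc k)) - f (Suc k) = - lam * pb \<beta> ^ Suc k * f (Suc k)"
    by (simp add: field_simps)
qed

lemma eigenfunction_level_values_tendsto_zero:
  assumes "0 < m" and "eigenfunction m \<beta> lam u" and level: "\<forall>x\<in>tree m. u x = f (length x)"
  shows "f \<longlonglongrightarrow> 0"
proof -
  have "(\<lambda>n. u (replicate n 0)) \<longlonglongrightarrow> 0"
    using assms(2) is_branch_replicate_zero[OF \<open>0 < m\<close>] unfolding eigenfunction_def by blast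
  moreover have "u (replicate n 0) = f n" for n
    using level replicate_zero_in_tree[OF \<open>0 < m\<close>] by simp
  ultimately show ?thesis by simp
qed

lemma scaled_difference_Suc:
  fixes f :: "nat \<Rightarrow> real"
  assumes "0 < \<beta>" and "\<beta> < 1"
    and recurrence: "\<beta> * f k + (1 - \<beta>) * f (Suc (Suc k)) - f (Suc k) = - lam * pb \<beta> ^ Suc k * f (Suc k)"
  shows "(f (Suc k) - f (Suc (Suc k))) / pb \<beta> ^ Suc k
           = (f k - f (Suc k)) / pb \<beta> ^ k + lam * f (Suc k) / (1 - \<beta>)"
proof -
  have "1 - \<beta> \<noteq> 0" "pb \<beta> \<noteq> 0"
    using pb_pos[OF assms(1,2)] \<open>\<beta> < 1\<close> by auto
  have "(1 - \<beta>) * (f (Suc k) - f (Suc (Suc k)))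
          = \<beta> * (f k - f (Suc k)) + lam * pb \<beta> ^ Suc k * f (Suc k)"
    using recurrence by (simp add: algebra_simps)
  also have "\<dots> = (1 - \<beta>) * (pb \<beta> * (f k - f (Suc k)) + lam * pb \<beta> ^ Suc k * f (Suc k) / (1 - \<beta>))"
    using \<open>1 - \<beta> \<noteq> 0\<close> by (simp add: distrib_left pb_def)
  finally have "f (Suc k) - f (Suc (Suc k))
                  = pb \<beta> * (f k - f (Suc k)) + lam * pb \<beta> ^ Suc k * f (Suc k) / (1 - \<beta>)"
    using \<open>1 - \<beta> \<noteq> 0\<close> by simp
  then show ?thesis
    using \<open>pb \<beta> \<noteq> 0\<close> by (simp add: add_divide_distrib)
qed

lemma scaled_difference_ge_initial:
  fixes f :: "nat \<Rightarrow> real"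
  assumes "0 < \<beta>" and "\<beta> < 1" and "0 \<le> lam" and nonneg: "\<And>k. 0 \<le> f k"
    and recurrence: "\<And>k. \<beta> * f k + (1 - \<beta>) * f (Suc (Suc k)) - f (Suc k) = - lam * pb \<beta> ^ Suc k * f (Suc k)"
  shows "f 0 - f 1 \<le> (f k - f (Suc k)) / pb \<beta> ^ k"
proof -
  have "incseq (\<lambda>k. (f k - f (Suc k)) / pb \<beta> ^ k)"
  proof (rule incseq_SucI)
    fix k
    have "0 \<le> lam * f (Suc k) / (1 - \<beta>)"
      using \<open>0 \<le> lam\<close> nonneg \<open>\<beta> < 1\<close> by (simp add: divide_nonneg_pos)
    then show "(f k - f (Suc k)) / pb \<beta> ^ k \<le> (f (Suc k) - f (Suc (Suc k))) / pb \<beta> ^ Suc k"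
      using scaled_difference_Suc[OF assms(1,2) recurrence] by simp
  qed
  from incseqD[OF this, of 0 k] show ?thesis
    by simp
qed

theorem lemma5p10:
  fixes m :: nat and \<beta> :: real and u :: "nat list \<Rightarrow> real" and uk :: "nat \<Rightarrow> real"
  assumes "m \<ge> 2"
    and "0 < \<beta>" and "\<beta> < 1/2"
    and "eigenfunction m \<beta> (lambda1 m \<beta>) u"
    and "u [] = 1"
    and "\<forall>x\<in>tree m. u x = uk (length x)"
    and "\<forall>k. uk (Suc k) < uk k"
  shows "Liminf sequentially (\<lambda>k. ereal ((uk k - uk (Suc k)) / (pb \<beta>) ^ k))
           \<ge> ereal (lambda1 m \<beta>)"
proof -
  have "0 < m" "\<beta> < 1"
    using assms(1,3) by auto
  have eq: "\<forall>x\<in>tree m. - Lap m \<beta> u x = lambda1 m \<beta> * u x"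
    using assms(4) unfolding eigenfunction_def by blast
  have "uk 0 = 1"
    using bspec[OF assms(6), of "[]"] assms(5) by (simp add: tree_def)
  then have root: "uk 0 - uk 1 = lambda1 m \<beta>"
    using level_values_recurrence_root[OF \<open>0 < m\<close> assms(2) \<open>\<beta> < 1\<close> eq assms(6)] by simp
  have "decseq uk"
    using assms(7) by (simp add: decseq_Suc_iff less_imp_le)
  then have nonneg: "0 \<le> uk k" for k
    using decseq_ge eigenfunction_level_values_tendsto_zero[OF \<open>0 < m\<close> assms(4,6)] by blast
  have "0 \<le> lambda1 m \<beta>"
    using root spec[OF assms(7), of 0] by simp
  then have "lambda1 m \<beta> \<le> (uk k - uk (Suc k)) / pb \<beta> ^ k" for k
    using scaled_difference_ge_initial[OF assms(2) \<open>\<beta> < 1\<close> _ nonneg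
        level_values_recurrence_Suc[OF \<open>0 < m\<close> assms(2) \<open>\<beta> < 1\<close> eq assms(6)]] root
    by simp
  then show ?thesis
    by (intro Liminf_bounded) simp
qed

end
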